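(* For every cycle structure $x$ of an element of $S_\infty$ there exists $b\in\mathbb{N}$ such that every metacyclic subgroup $D\le S_\infty$ (finite) contains at most $b$ elements with cycle structure $x$.
   Context: $S_\infty$ is the group of permutations of $\mathbb{N}$ fixing all but finitely many elements; the cycle structure of a permutation is the non-increasing sequence of lengths of its disjoint cycles. A group is metacyclic if it has a cyclic normal subgroup with cyclic quotient. *)

theory Defs
  imports "HOL-Algebra.Algebra" "HOL-Library.Multiset"
begin

definition finitary_perm :: "(nat \<Rightarrow> nat) \<Rightarrow> bool" where
  "finitary_perm p \<longleftrightarrow> bij p \<and> finite {n. p n \<noteq> n}"

definition S_inf :: "(nat \<Rightarrow> nat) monoid" where
  "S_inf = (BijGroup (UNIV :: nat set)) \<lparr>carrier := {p. finitary_perm p}\<rparr>"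

definition perm_orbit :: "(nat \<Rightarrow> nat) \<Rightarrow> nat \<Rightarrow> nat set" where
  "perm_orbit p x = {(p ^^ k) x | k. True}"

text \<open>Cycle structure: non-increasing list of the lengths of the nontrivial
  disjoint cycles (fixed points omitted, since there are infinitely many).\<close>
definition cycle_structure :: "(nat \<Rightarrow> nat) \<Rightarrow> nat list" where
  "cycle_structure p =
     rev (sorted_list_of_multiset
       (image_mset card (mset_set {perm_orbit p x | x. p x \<noteq> x})))"

definition metacyclic :: "('a, 'b) monoid_scheme \<Rightarrow> bool" where
  "metacyclic G \<longleftrightarrow> (\<exists>N. N \<lhd> G \<and> cyclic_group (subgroup_generated G N)
                          \<and> cyclic_group (G Mod N))"

end

theory Submission
  imports Defs
begin

(* Let s be the sum of the cycle lengths of sigma, so every g with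
   the cycle structure of sigma moves at most s points and hence g ^ s! = id.
   Let D be a finite subgroup of S_inf with a cyclic normal subgroup N and a
   cyclic quotient D/N.
   (1) The coset N g of such a g satisfies (N g) ^ s! = 1 in D/N, and a finite
       cyclic group has at most s! solutions of y ^ s! = 1.
   (2) Two such elements g, h in the same coset differ by g h^-1 in N, which
       moves at most 2s points.  N consists of the powers of one finitary
       permutation a, and the powers of a moving at most t points number at
       most (t^2+1)^(t^2): their supports lie in the set of points whose
       a-period is at most t and is shared by at most t points, a set of size
       at most t^2, and a power is determined by its restriction to that set.
   So at most s! * ((2s)^2+1)^((2s)^2) elements of D share the cycle structure
   of sigma, a bound independent of D. *)

definition supp :: "(nat \<Rightarrow> nat) \<Rightarrow> nat set" where
  "supp p = {x. p x \<noteq> x}"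

lemma finitary_perm_iff: "finitary_perm p \<longleftrightarrow> bij p \<and> finite (supp p)"
  by (simp add: finitary_perm_def supp_def)

lemma funpow_fixed: "p x = x \<Longrightarrow> (p ^^ n) x = x"
  by (induction n) auto

lemma supp_funpow_subset: "supp (p ^^ n) \<subseteq> supp p"
  using funpow_fixed[of p] by (auto simp: supp_def)

lemma supp_comp_subset: "supp (f \<circ> g) \<subseteq> supp f \<union> supp g"
  by (auto simp: supp_def)

lemma supp_inv:
  assumes "inj f"
  shows "supp (inv_into UNIV f) \<subseteq> supp f"
proof
  fix x assume "x \<in> supp (inv_into UNIV f)"
  moreover have "inv_into UNIV f x = x" if "f x = x"
    using inv_f_f[OF assms, of x] that by simp
  ultimately show "x \<in> supp f" by (auto simp: supp_def)
qed

lemma card_supp_comp_inv: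
  assumes "finitary_perm g" "finitary_perm h"
  shows "card (supp (g \<circ> inv_into UNIV h)) \<le> card (supp g) + card (supp h)"
proof -
  have "supp (g \<circ> inv_into UNIV h) \<subseteq> supp g \<union> supp h"
    using supp_comp_subset[of g "inv_into UNIV h"] supp_inv[of h] assms(2)
    by (auto simp: finitary_perm_iff bij_is_inj)
  moreover have "finite (supp g \<union> supp h)"
    using assms by (simp add: finitary_perm_iff)
  ultimately have "card (supp (g \<circ> inv_into UNIV h)) \<le> card (supp g \<union> supp h)"
    by (rule card_mono[rotated])
  also have "\<dots> \<le> card (supp g) + card (supp h)"
    by (rule card_Un_le)
  finally show ?thesis .
qed

lemma funpow_commute: "(p ^^ m) ((p ^^ n) x) = (p ^^ n) ((p ^^ m) x)"
  by (metis add.commute comp_apply funpow_add)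

lemma funpow_moves_supp:
  assumes "inj p" "x \<in> supp (p ^^ k)"
  shows "(p ^^ j) x \<in> supp (p ^^ k)"
proof -
  have "(p ^^ j) ((p ^^ k) x) \<noteq> (p ^^ j) x"
    using assms(2) injD[OF inj_fn[OF assms(1)], of j] by (auto simp: supp_def)
  then show ?thesis by (simp add: supp_def funpow_commute)
qed

lemma supp_funpow_closed:
  assumes "inj p" "x \<in> supp p"
  shows "(p ^^ j) x \<in> supp p"
  using funpow_moves_supp[of p x 1 j] assms by simp

(* Pigeonhole: if the first t+1 iterates of x stay in a set of at most t points,
   then x returns to itself after d <= t steps. *)
lemma funpow_return_within:
  assumes "inj p" "finite S" "card S \<le> t" "\<And>j. j \<le> t \<Longrightarrow> (p ^^ j) x \<in> S"
  shows "\<exists>d. 0 < d \<and> d \<le> t \<and> (p ^^ d) x = x"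
proof -
  have "(\<lambda>j. (p ^^ j) x) ` {0..t} \<subseteq> S" using assms(4) by auto
  from card_mono[OF assms(2) this] assms(3)
  have "card ((\<lambda>j. (p ^^ j) x) ` {0..t}) \<le> t" by simp
  then have "\<not> inj_on (\<lambda>j. (p ^^ j) x) {0..t}"
    by (auto dest: card_image)
  then obtain i j where "i \<le> t" "j \<le> t" "i \<noteq> j" "(p ^^ i) x = (p ^^ j) x"
    unfolding inj_on_def by auto
  then have "\<exists>i j. i < j \<and> j \<le> t \<and> (p ^^ i) x = (p ^^ j) x"
    by (metis linorder_neqE_nat)
  then obtain i j where ij: "i < j" "j \<le> t" "(p ^^ i) x = (p ^^ j) x" by blast
  have "(p ^^ i) ((p ^^ (j - i)) x) = (p ^^ (i + (j - i))) x"
    by (simp only: funpow_add comp_apply)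
  also have "\<dots> = (p ^^ i) x" using ij by simp
  finally have "(p ^^ i) ((p ^^ (j - i)) x) = (p ^^ i) x" .
  then have "(p ^^ (j - i)) x = x"
    using inj_fn[OF assms(1), of i] by (auto dest: injD)
  then show ?thesis using ij by (intro exI[of _ "j - i"]) auto
qed

lemma funpow_fact_eq_id:
  assumes "inj p" "finite (supp p)" "card (supp p) \<le> s"
  shows "p ^^ fact s = id"
proof
  fix x
  show "(p ^^ fact s) x = id x"
  proof (cases "x \<in> supp p")
    case False
    then show ?thesis by (simp add: supp_def funpow_fixed)
  next
    case True
    obtain d where d: "0 < d" "d \<le> s" "(p ^^ d) x = x"
      using funpow_return_within[OF assms] supp_funpow_closed[OF assms(1) True] by blast
    have "fact s mod d = (0::nat)"
      using d by (simp add: dvd_fact dvd_imp_mod_0)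
    then show ?thesis
      using funpow_mod_eq[OF d(3), of "fact s"] by simp
  qed
qed

lemma card_supp_le_cycle_structure:
  assumes "finitary_perm p"
  shows "card (supp p) \<le> sum_list (cycle_structure p)"
proof -
  have inj: "inj p" and fin: "finite (supp p)"
    using assms by (simp_all add: finitary_perm_iff bij_is_inj)
  define Os where "Os = {perm_orbit p x | x. p x \<noteq> x}"
  have Os: "Os = perm_orbit p ` supp p"
    by (auto simp: Os_def supp_def)
  have "x \<in> perm_orbit p x" for x
    by (auto simp: perm_orbit_def intro: exI[of _ 0])
  moreover have "perm_orbit p x \<subseteq> supp p" if "x \<in> supp p" for x
    using supp_funpow_closed[OF inj that] by (auto simp: perm_orbit_def)
  ultimately have "\<Union>Os = supp p"
    unfolding Os by blast
  then have "card (supp p) \<le> sum card Os"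
    using card_Union_le_sum_card[of Os] by simp
  also have "sum card Os = sum_list (cycle_structure p)"
    unfolding cycle_structure_def Os_def[symmetric] sum_list_rev
    by (simp add: sum_unfold_sum_mset sum_mset_sum_list[symmetric])
  finally show ?thesis .
qed

lemma finitary_perm_comp:
  assumes "finitary_perm f" "finitary_perm g"
  shows "finitary_perm (f \<circ> g)"
proof -
  have "finite (supp f \<union> supp g)"
    using assms by (simp add: finitary_perm_iff)
  then have "finite (supp (f \<circ> g))"
    by (rule finite_subset[OF supp_comp_subset])
  then show ?thesis
    using assms by (simp add: finitary_perm_iff bij_comp)
qed

lemma finitary_perm_inv:
  assumes "finitary_perm f"
  shows "finitary_perm (inv_into UNIV f)"
proof -
  have "bij f" using assms by (simp add: finitary_perm_iff)
  have "finite (supp f)"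
    using assms by (simp add: finitary_perm_iff)
  then have "finite (supp (inv_into UNIV f))"
    by (rule finite_subset[OF supp_inv[OF bij_is_inj[OF \<open>bij f\<close>]]])
  then show ?thesis
    using \<open>bij f\<close> by (simp add: finitary_perm_iff bij_imp_bij_inv)
qed

lemma Bij_UNIV: "Bij (UNIV :: 'a set) = {f. bij f}"
  by (auto simp: Bij_def)

lemma compose_UNIV: "compose UNIV f g = f \<circ> g"
  by (auto simp: compose_def)

lemma subgroup_finitary_perm: "subgroup {p. finitary_perm p} (BijGroup UNIV)"
proof
  show "{p. finitary_perm p} \<subseteq> carrier (BijGroup UNIV)"
    by (auto simp: BijGroup_def Bij_UNIV finitary_perm_def)
  show "\<one>\<^bsub>BijGroup UNIV\<^esub> \<in> {p. finitary_perm p}"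
    by (auto simp: BijGroup_def finitary_perm_def id_def[symmetric])
next
  fix f g assume "f \<in> {p. finitary_perm p}" "g \<in> {p. finitary_perm p}"
  then show "f \<otimes>\<^bsub>BijGroup UNIV\<^esub> g \<in> {p. finitary_perm p}"
    using finitary_perm_comp[of f g]
    by (auto simp: BijGroup_def Bij_UNIV finitary_perm_def compose_UNIV)
next
  fix f assume f: "f \<in> {p. finitary_perm p}"
  then have "f \<in> Bij UNIV" by (simp add: Bij_UNIV finitary_perm_def)
  then have "inv\<^bsub>BijGroup UNIV\<^esub> f = inv_into UNIV f"
    by (simp add: inv_BijGroup restrict_def)
  then show "inv\<^bsub>BijGroup UNIV\<^esub> f \<in> {p. finitary_perm p}"
    using f finitary_perm_inv by auto
qed

lemma group_S_inf: "group S_inf"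
  unfolding S_inf_def
  using subgroup.subgroup_is_group[OF subgroup_finitary_perm group_BijGroup] .

lemma S_inf_carrier: "carrier S_inf = {p. finitary_perm p}"
  by (simp add: S_inf_def)

lemma S_inf_mult:
  assumes "f \<in> carrier S_inf" "g \<in> carrier S_inf"
  shows "f \<otimes>\<^bsub>S_inf\<^esub> g = f \<circ> g"
  using assms by (auto simp: S_inf_def BijGroup_def Bij_UNIV finitary_perm_def compose_UNIV)

lemma S_inf_one: "\<one>\<^bsub>S_inf\<^esub> = id"
  by (auto simp: S_inf_def BijGroup_def id_def)

lemma S_inf_pow:
  assumes "f \<in> carrier S_inf"
  shows "f [^]\<^bsub>S_inf\<^esub> (n::nat) = f ^^ n"
proof (induction n)
  case (Suc n)
  have "f [^]\<^bsub>S_inf\<^esub> n \<in> carrier S_inf"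
    using assms by (simp add: group.is_monoid[OF group_S_inf] monoid.nat_pow_closed)
  then show ?case
    using Suc assms by (simp add: S_inf_mult funpow_Suc_right del: funpow.simps)
qed (simp add: S_inf_one)

lemma S_inf_inv:
  assumes "f \<in> carrier S_inf"
  shows "inv\<^bsub>S_inf\<^esub> f = inv_into UNIV f"
proof (rule group.inv_equality[OF group_S_inf])
  have "bij f" using assms by (simp add: S_inf_carrier finitary_perm_def)
  then show "inv_into UNIV f \<otimes>\<^bsub>S_inf\<^esub> f = \<one>\<^bsub>S_inf\<^esub>"
    using assms finitary_perm_inv by (simp add: S_inf_mult S_inf_carrier S_inf_one bij_is_inj)
  show "inv_into UNIV f \<in> carrier S_inf"
    using assms by (simp add: S_inf_carrier finitary_perm_inv)
qed (fact assms)

lemma S_inf_restrict_pow: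
  assumes "D \<subseteq> carrier S_inf" "g \<in> D"
  shows "g [^]\<^bsub>S_inf\<lparr>carrier := D\<rparr>\<^esub> (n::nat) = g ^^ n"
  using monoid.nat_pow_consistent[OF group.is_monoid[OF group_S_inf], of g n D]
    S_inf_pow[of g n] assms by auto

definition period :: "(nat \<Rightarrow> nat) \<Rightarrow> nat \<Rightarrow> nat" where
  "period a x = (LEAST d. 0 < d \<and> (a ^^ d) x = x)"

lemma finitary_perm_finite_supp_funpow:
  assumes "finitary_perm a"
  shows "finite (supp (a ^^ k))"
  using assms finite_subset[OF supp_funpow_subset] by (simp add: finitary_perm_iff)

(* Every point is periodic under a finitary a, since a^(n!) = id for n = |supp a|. *)
lemma
  assumes "finitary_perm a"
  shows period_pos: "0 < period a x"
    and funpow_period: "(a ^^ period a x) x = x"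
proof -
  have "a ^^ fact (card (supp a)) = id"
    using assms by (intro funpow_fact_eq_id) (simp_all add: finitary_perm_iff bij_is_inj)
  then have "\<exists>d. 0 < d \<and> (a ^^ d) x = x"
    by (intro exI[of _ "fact (card (supp a))"]) simp
  from LeastI_ex[OF this] show "0 < period a x" "(a ^^ period a x) x = x"
    unfolding period_def by simp_all
qed

lemma funpow_eq_self_iff:
  assumes "finitary_perm a"
  shows "(a ^^ k) x = x \<longleftrightarrow> period a x dvd k"
proof -
  have mod: "(a ^^ (k mod period a x)) x = (a ^^ k) x"
    using funpow_mod_eq[OF funpow_period[OF assms]] .
  show ?thesis
  proof
    assume "(a ^^ k) x = x"
    then have "(a ^^ (k mod period a x)) x = x" using mod by simp
    moreover have "k mod period a x < period a x"
      using period_pos[OF assms] by simp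
    then have "\<not> (0 < k mod period a x \<and> (a ^^ (k mod period a x)) x = x)"
      unfolding period_def by (rule not_less_Least)
    ultimately have "\<not> 0 < k mod period a x" by simp
    then show "period a x dvd k" by (simp add: dvd_eq_mod_eq_0)
  next
    assume "period a x dvd k"
    then show "(a ^^ k) x = x" using mod by (simp add: dvd_eq_mod_eq_0)
  qed
qed

lemma period_le_card_supp:
  assumes "finitary_perm a" "x \<in> supp (a ^^ k)" "card (supp (a ^^ k)) \<le> t"
  shows "period a x \<le> t"
proof -
  have inj: "inj a" using assms(1) by (simp add: finitary_perm_iff bij_is_inj)
  obtain d where d: "0 < d" "d \<le> t" "(a ^^ d) x = x"
    using funpow_return_within[OF inj finitary_perm_finite_supp_funpow[OF assms(1)] assms(3)]
      funpow_moves_supp[OF inj assms(2)] by blast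
  have "period a x dvd d" using d(3) funpow_eq_self_iff[OF assms(1)] by simp
  with d show ?thesis by (meson dvd_imp_le order.trans)
qed

(* Points whose period is at most t and is shared by at most t points; at most
   t^2 of them exist, and they contain the support of every power of a moving
   at most t points. *)
definition short_period_points :: "(nat \<Rightarrow> nat) \<Rightarrow> nat \<Rightarrow> nat set" where
  "short_period_points a t =
     {x. period a x \<le> t \<and> finite {y. period a y = period a x}
         \<and> card {y. period a y = period a x} \<le> t}"

lemma card_short_period_points:
  assumes "finitary_perm a"
  shows "finite (short_period_points a t)" "card (short_period_points a t) \<le> t * t"
proof -
  define P where "P l = {y. period a y = l}" for l
  define Q where "Q l = (if finite (P l) \<and> card (P l) \<le> t then P l else {})" for l
  have sub: "short_period_points a t \<subseteq> (\<Union>l\<in>{1..t}. Q l)"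
  proof
    fix x assume "x \<in> short_period_points a t"
    moreover have "1 \<le> period a x" using period_pos[OF assms] by (simp add: Suc_le_eq)
    ultimately show "x \<in> (\<Union>l\<in>{1..t}. Q l)"
      by (auto simp: short_period_points_def Q_def P_def intro!: bexI[of _ "period a x"])
  qed
  moreover have fin: "finite (\<Union>l\<in>{1..t}. Q l)"
    by (simp add: Q_def)
  ultimately show "finite (short_period_points a t)"
    by (rule finite_subset)
  have "card (short_period_points a t) \<le> card (\<Union>l\<in>{1..t}. Q l)"
    using card_mono[OF fin] sub .
  also have "\<dots> \<le> (\<Sum>l\<in>{1..t}. card (Q l))"
    by (rule card_UN_le) simp
  also have "\<dots> \<le> t * t"
    using sum_bounded_above[of "{1..t}" "\<lambda>l. card (Q l)" t] by (simp add: Q_def)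
  finally show "card (short_period_points a t) \<le> t * t" .
qed

lemma supp_small_power_subset:
  assumes "finitary_perm a" "card (supp (a ^^ k)) \<le> t"
  shows "supp (a ^^ k) \<subseteq> short_period_points a t"
proof
  fix x assume x: "x \<in> supp (a ^^ k)"
  have sub: "{y. period a y = period a x} \<subseteq> supp (a ^^ k)"
    using x funpow_eq_self_iff[OF assms(1)] by (auto simp: supp_def)
  have fin: "finite (supp (a ^^ k))"
    by (rule finitary_perm_finite_supp_funpow[OF assms(1)])
  have "finite {y. period a y = period a x}"
    using finite_subset[OF sub fin] .
  moreover have "card {y. period a y = period a x} \<le> t"
    using card_mono[OF fin sub] assms(2) by simp
  ultimately show "x \<in> short_period_points a t"
    using period_le_card_supp[OF assms(1) x assms(2)] by (simp add: short_period_points_def)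
qed

lemma eq_if_restrict_eq:
  assumes "supp f \<subseteq> U" "supp g \<subseteq> U" "restrict f U = restrict g U"
  shows "f = g"
proof
  fix x show "f x = g x"
  proof (cases "x \<in> U")
    case True
    then show ?thesis using fun_cong[OF assms(3), of x] by simp
  next
    case False
    then have "x \<notin> supp f" "x \<notin> supp g" using assms(1,2) by blast+
    then show ?thesis by (simp add: supp_def)
  qed
qed

(* Count (2): the powers of a finitary permutation moving at most t points are
   finitely many, at most (t^2+1)^(t^2), since each maps the short-period points
   into themselves and is determined by its restriction to them. *)
lemma small_support_powers:
  assumes "finitary_perm a"
  shows "finite {n. (\<exists>k. n = a ^^ k) \<and> card (supp n) \<le> t}"
    and "card {n. (\<exists>k. n = a ^^ k) \<and> card (supp n) \<le> t} \<le> (t * t + 1) ^ (t * t)"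
proof -
  define F where "F = {n. (\<exists>k. n = a ^^ k) \<and> card (supp n) \<le> t}"
  define U where "U = short_period_points a t"
  have finU: "finite U" and cardU: "card U \<le> t * t"
    unfolding U_def using card_short_period_points[OF assms] by simp_all
  have suppU: "supp n \<subseteq> U" if "n \<in> F" for n
    using that supp_small_power_subset[OF assms] by (auto simp: F_def U_def)
  have inj: "inj_on (\<lambda>n. restrict n U) F"
  proof (rule inj_onI)
    fix n m assume "n \<in> F" "m \<in> F" "restrict n U = restrict m U"
    then show "n = m" using suppU by (blast intro: eq_if_restrict_eq)
  qed
  have "n x \<in> U" if "n \<in> F" "x \<in> U" for n x
  proof (cases "x \<in> supp n")
    case True
    obtain k where "n = a ^^ k" using \<open>n \<in> F\<close> by (auto simp: F_def)
    then have "n x \<in> supp n"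
      using funpow_moves_supp[of a x k k] True assms by (simp add: finitary_perm_iff bij_is_inj)
    then show ?thesis using suppU[OF that(1)] by blast
  qed (use that in \<open>simp add: supp_def\<close>)
  then have img: "(\<lambda>n. restrict n U) ` F \<subseteq> U \<rightarrow>\<^sub>E U" by auto
  have finPiE: "finite (U \<rightarrow>\<^sub>E U)" using finU by (simp add: finite_PiE)
  show "finite {n. (\<exists>k. n = a ^^ k) \<and> card (supp n) \<le> t}"
    unfolding F_def[symmetric] using finite_imageD[OF finite_subset[OF img finPiE] inj] .
  from img have "card F \<le> card (U \<rightarrow>\<^sub>E U)"
    using card_inj_on_le[OF inj] finPiE by simp
  also have "\<dots> = card U ^ card U"
    using finU by (simp add: card_PiE)
  also have "\<dots> \<le> (t * t + 1) ^ (t * t)"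
    using cardU by (simp add: order.trans[OF power_mono power_increasing])
  finally show "card {n. (\<exists>k. n = a ^^ k) \<and> card (supp n) \<le> t} \<le> (t * t + 1) ^ (t * t)"
    unfolding F_def .
qed

lemma cyclic_subgroup_powers:
  assumes D: "subgroup D S_inf" "finite D"
    and N: "subgroup N (S_inf\<lparr>carrier := D\<rparr>)"
    and cyc: "cyclic_group (subgroup_generated (S_inf\<lparr>carrier := D\<rparr>) N)"
  shows "\<exists>a. finitary_perm a \<and> N \<subseteq> range (\<lambda>k. a ^^ k)"
proof -
  define G where "G = S_inf\<lparr>carrier := D\<rparr>"
  define H where "H = subgroup_generated G N"
  have "group G" unfolding G_def by (rule subgroup.subgroup_is_group[OF D(1) group_S_inf])
  then interpret H: group H unfolding H_def by (rule group.group_subgroup_generated)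
  have carH: "carrier H = N"
    unfolding H_def G_def by (rule subgroup.carrier_subgroup_generated_subgroup[OF N])
  have ND: "N \<subseteq> D" using subgroup.subset[OF N] by simp
  obtain a where a: "a \<in> N" "subgroup_generated H {a} = H"
    using cyc carH unfolding cyclic_group_def H_def G_def by auto
  have pow: "a [^]\<^bsub>H\<^esub> k = a ^^ k" for k :: nat
    using S_inf_restrict_pow[OF subgroup.subset[OF D(1)]] a(1) ND
    unfolding H_def G_def pow_subgroup_generated by auto
  have "N = generate H {a}"
    using arg_cong[OF a(2), of carrier] a(1) carH by (simp add: carrier_subgroup_generated)
  also have "\<dots> = {a [^]\<^bsub>H\<^esub> k | k. k \<in> (UNIV :: nat set)}"
    using H.generate_pow_on_finite_carrier[of a] finite_subset[OF ND D(2)] a(1) carH by simp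
  finally have "N \<subseteq> range (\<lambda>k. a ^^ k)" by (auto simp: pow)
  moreover have "finitary_perm a"
    using a(1) ND subgroup.subset[OF D(1)] by (auto simp: S_inf_carrier)
  ultimately show ?thesis by blast
qed

lemma cyclic_small_support_count:
  assumes "subgroup D S_inf" "finite D" "subgroup N (S_inf\<lparr>carrier := D\<rparr>)"
    and "cyclic_group (subgroup_generated (S_inf\<lparr>carrier := D\<rparr>) N)"
  shows "card {n \<in> N. card (supp n) \<le> t} \<le> (t * t + 1) ^ (t * t)"
proof -
  obtain a where a: "finitary_perm a" "N \<subseteq> range (\<lambda>k. a ^^ k)"
    using cyclic_subgroup_powers[OF assms] by blast
  then have "{n \<in> N. card (supp n) \<le> t} \<subseteq> {n. (\<exists>k. n = a ^^ k) \<and> card (supp n) \<le> t}"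
    by blast
  from card_mono[OF small_support_powers(1)[OF a(1)] this]
  show ?thesis using small_support_powers(2)[OF a(1), of t] by linarith
qed

(* The elements of one right coset N h of S_inf moving at most s points, where h
   itself moves at most s points, are no more than the elements of N moving at
   most 2s points: g -> g h^-1 is injective and lands there. *)
lemma coset_small_support_count:
  assumes N: "subgroup N S_inf" "finite N"
    and h: "h \<in> carrier S_inf" "card (supp h) \<le> s"
  shows "card {g \<in> N #>\<^bsub>S_inf\<^esub> h. card (supp g) \<le> s} \<le> card {n \<in> N. card (supp n) \<le> 2 * s}"
proof (rule card_inj_on_le)
  let ?quot = "\<lambda>g. g \<circ> inv_into UNIV h"
  have h_fin: "finitary_perm h" "inv_into UNIV h \<in> carrier S_inf"
    using h(1) by (simp_all add: S_inf_carrier finitary_perm_inv)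
  show "inj_on ?quot {g \<in> N #>\<^bsub>S_inf\<^esub> h. card (supp g) \<le> s}"
  proof (rule inj_onI)
    fix g g' :: "nat \<Rightarrow> nat" assume "?quot g = ?quot g'"
    then have "?quot g \<circ> h = ?quot g' \<circ> h" by simp
    moreover have "inv_into UNIV h \<circ> h = id"
      using h_fin(1) by (simp add: finitary_perm_iff bij_is_inj)
    ultimately show "g = g'" by (simp add: comp_assoc)
  qed
  show "?quot ` {g \<in> N #>\<^bsub>S_inf\<^esub> h. card (supp g) \<le> s} \<subseteq> {n \<in> N. card (supp n) \<le> 2 * s}"
  proof (rule image_subsetI)
    fix g assume "g \<in> {g \<in> N #>\<^bsub>S_inf\<^esub> h. card (supp g) \<le> s}"
    then have g: "g \<in> N #>\<^bsub>S_inf\<^esub> h" "card (supp g) \<le> s" by simp_all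
    have gS: "g \<in> carrier S_inf"
      using monoid.r_coset_subset_G[OF group.is_monoid[OF group_S_inf] subgroup.subset[OF N(1)] h(1)] g(1)
      by blast
    have "g \<otimes>\<^bsub>S_inf\<^esub> inv\<^bsub>S_inf\<^esub> h \<in> N"
      by (rule subgroup.rcos_module_imp[OF N(1) group_S_inf h(1) g(1)])
    then have "?quot g \<in> N"
      using gS h(1) h_fin(2) by (simp add: S_inf_inv S_inf_mult)
    moreover have "card (supp (?quot g)) \<le> 2 * s"
      using card_supp_comp_inv[of g h] gS h_fin(1) g(2) h(2) by (simp add: S_inf_carrier)
    ultimately show "?quot g \<in> {n \<in> N. card (supp n) \<le> 2 * s}" by simp
  qed
  show "finite {n \<in> N. card (supp n) \<le> 2 * s}"
    using N(2) by simp
qed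

lemma coset_pow_fact_eq_one:
  assumes D: "subgroup D S_inf" and N: "N \<lhd> S_inf\<lparr>carrier := D\<rparr>"
    and g: "g \<in> D" "card (supp g) \<le> s"
  shows "(N #>\<^bsub>S_inf\<lparr>carrier := D\<rparr>\<^esub> g) [^]\<^bsub>S_inf\<lparr>carrier := D\<rparr> Mod N\<^esub> (fact s :: nat)
           = \<one>\<^bsub>S_inf\<lparr>carrier := D\<rparr> Mod N\<^esub>"
proof -
  define G where "G = S_inf\<lparr>carrier := D\<rparr>"
  interpret G: group G unfolding G_def by (rule subgroup.subgroup_is_group[OF D group_S_inf])
  interpret N: normal N G using N by (simp add: G_def)
  have DS: "D \<subseteq> carrier S_inf" by (rule subgroup.subset[OF D])
  have "finitary_perm g" using DS g(1) by (auto simp: S_inf_carrier)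
  then have "g ^^ fact s = id"
    using g(2) by (intro funpow_fact_eq_id) (auto simp: finitary_perm_iff bij_is_inj)
  then have "g [^]\<^bsub>G\<^esub> (fact s :: nat) = \<one>\<^bsub>G\<^esub>"
    using S_inf_restrict_pow[OF DS g(1)] by (simp add: G_def S_inf_one)
  then show ?thesis
    using N.FactGroup_pow[of g "fact s :: nat"] G.coset_mult_one[OF N.subset] g(1)
    by (simp add: G_def)
qed

(* Among the residues i < r, those with r dvd i M are at most M many:
   i -> i M div r maps them injectively into {..<M}. *)
lemma card_dvd_mult_le:
  assumes M: "0 < M"
  shows "card {i. i < r \<and> r dvd i * M} \<le> M"
proof -
  define I where "I = {i. i < r \<and> r dvd i * M}"
  have "card I \<le> card {..<M}"
  proof (rule card_inj_on_le)
    show "inj_on (\<lambda>i. i * M div r) I"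
    proof
      fix i j assume ij: "i \<in> I" "j \<in> I" "i * M div r = j * M div r"
      have "i * M = (i * M div r) * r" using ij(1) by (simp add: I_def)
      also have "\<dots> = (j * M div r) * r" using ij(3) by simp
      also have "\<dots> = j * M" using ij(2) by (simp add: I_def)
      finally have "i * M = j * M" .
      then show "i = j" using M by simp
    qed
    show "(\<lambda>i. i * M div r) ` I \<subseteq> {..<M}"
    proof
      fix z assume "z \<in> (\<lambda>i. i * M div r) ` I"
      then obtain i where i: "i < r" "z = i * M div r" by (auto simp: I_def)
      then have "i * M < M * r" using M by simp
      then show "z \<in> {..<M}" using i by (simp add: div_less_iff_less_mult)
    qed
  qed simp
  then show ?thesis by (simp add: I_def)
qed

(* Count (1): a finite cyclic group generated by c of order r has at most M
   solutions of y^M = 1, since c^i with i < r is such a solution iff r dvd i M. *)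
lemma (in group) card_pow_eq_one_cyclic:
  assumes fin: "finite (carrier G)" and cyc: "cyclic_group G" and M: "0 < M"
  shows "card {y \<in> carrier G. y [^] M = \<one>} \<le> M"
proof -
  obtain c where c: "c \<in> carrier G" "subgroup_generated G {c} = G"
    using cyc unfolding cyclic_group_def by blast
  define r where "r = ord c"
  have r: "1 \<le> r" using ord_ge_1[OF fin c(1)] by (simp add: r_def)
  have "carrier G = generate G {c}"
    using arg_cong[OF c(2), of carrier] c(1) by (simp add: carrier_subgroup_generated)
  also have "\<dots> = {c [^] i | i. i \<in> {0 .. r - 1}}"
    unfolding r_def using generate_pow_on_finite_carrier[OF fin c(1)] ord_elems[OF fin c(1)]
    by (rule trans)
  also have "{0 .. r - 1} = {..<r}"
    using r by auto
  finally have car: "carrier G = {c [^] i | i. i \<in> {..<r}}" .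
  define I where "I = {i. i < r \<and> r dvd i * M}"
  have finI: "finite I" by (simp add: I_def)
  have sub: "{y \<in> carrier G. y [^] M = \<one>} \<subseteq> (\<lambda>i. c [^] i) ` I"
  proof
    fix y assume y: "y \<in> {y \<in> carrier G. y [^] M = \<one>}"
    then obtain i where i: "i < r" "y = c [^] i" using car by blast
    then have "c [^] (i * M) = \<one>" using y c(1) by (simp add: nat_pow_pow)
    then have "r dvd i * M" using pow_eq_id[OF c(1)] by (simp add: r_def)
    then show "y \<in> (\<lambda>i. c [^] i) ` I" using i by (auto simp: I_def)
  qed
  have "card {y \<in> carrier G. y [^] M = \<one>} \<le> card ((\<lambda>i. c [^] i) ` I)"
    using card_mono[OF finite_imageI[OF finI] sub] .
  also have "\<dots> \<le> card I"
    using card_image_le[OF finI] .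
  also have "\<dots> \<le> M"
    unfolding I_def using card_dvd_mult_le[OF M] .
  finally show ?thesis .
qed

lemma card_le_card_image_mult:
  assumes "finite A" "\<And>y. y \<in> f ` A \<Longrightarrow> card {x \<in> A. f x = y} \<le> k"
  shows "card A \<le> card (f ` A) * k"
proof -
  have "A = (\<Union>y\<in>f ` A. {x \<in> A. f x = y})" by auto
  then have "card A \<le> (\<Sum>y\<in>f ` A. card {x \<in> A. f x = y})"
    using card_UN_le[of "f ` A" "\<lambda>y. {x \<in> A. f x = y}"] assms(1) by simp
  also have "\<dots> \<le> card (f ` A) * k"
    using sum_bounded_above[of "f ` A" "\<lambda>y. card {x \<in> A. f x = y}" k] assms(2) by simp
  finally show ?thesis .
qed

(* There
   are at most s! cosets of N containing such elements (count (1)), and each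
   contains at most ((2s)^2+1)^((2s)^2) of them (count (2)). *)
lemma metacyclic_small_support_count:
  assumes D: "subgroup D S_inf" and fin: "finite D"
    and meta: "metacyclic (S_inf\<lparr>carrier := D\<rparr>)"
  shows "card {g \<in> D. card (supp g) \<le> s} \<le> fact s * ((2 * s) * (2 * s) + 1) ^ ((2 * s) * (2 * s))"
proof -
  define G where "G = S_inf\<lparr>carrier := D\<rparr>"
  interpret G: group G unfolding G_def by (rule subgroup.subgroup_is_group[OF D group_S_inf])
  obtain N where N: "N \<lhd> G" "cyclic_group (subgroup_generated G N)" "cyclic_group (G Mod N)"
    using meta unfolding metacyclic_def G_def by blast
  interpret N: normal N G by (rule N(1))
  interpret Q: group "G Mod N" by (rule N.factorgroup_is_group)
  have NS: "subgroup N S_inf"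
    using group.incl_subgroup[OF group_S_inf D] N.subgroup_axioms by (simp add: G_def)
  have finN: "finite N" using N.subset fin finite_subset by (auto simp: G_def)
  define E where "E = {g \<in> D. card (supp g) \<le> s}"
  define coset where "coset g = N #>\<^bsub>G\<^esub> g" for g
  define roots where
    "roots = {y \<in> carrier (G Mod N). y [^]\<^bsub>G Mod N\<^esub> (fact s :: nat) = \<one>\<^bsub>G Mod N\<^esub>}"
  have "coset ` E \<subseteq> roots"
    using coset_pow_fact_eq_one[OF D N(1)[unfolded G_def]]
    by (auto simp: roots_def E_def coset_def G_def carrier_FactGroup)
  moreover have finQ: "finite (carrier (G Mod N))"
    using fin by (simp add: carrier_FactGroup G_def)
  then have "finite roots" by (simp add: roots_def)
  ultimately have "card (coset ` E) \<le> card roots" by (intro card_mono)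
  also have "\<dots> \<le> fact s"
    unfolding roots_def by (rule Q.card_pow_eq_one_cyclic[OF finQ N(3)]) simp
  finally have card_cosets: "card (coset ` E) \<le> fact s" .
  have fibre: "card {g \<in> E. coset g = y} \<le> ((2 * s) * (2 * s) + 1) ^ ((2 * s) * (2 * s))"
    if "y \<in> coset ` E" for y
  proof -
    obtain h where h: "h \<in> E" "y = coset h" using \<open>y \<in> coset ` E\<close> by blast
    have hS: "h \<in> carrier S_inf" using h(1) subgroup.subset[OF D] by (auto simp: E_def)
    have "{g \<in> E. coset g = y} \<subseteq> {g \<in> N #>\<^bsub>S_inf\<^esub> h. card (supp g) \<le> s}"
    proof
      fix g assume "g \<in> {g \<in> E. coset g = y}"
      then have g: "g \<in> E" "coset g = y" by simp_all
      then have "g \<in> N #>\<^bsub>G\<^esub> h"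
        using G.rcos_self[OF _ N.subgroup_axioms, of g] h(2) by (simp add: E_def coset_def G_def)
      then show "g \<in> {g \<in> N #>\<^bsub>S_inf\<^esub> h. card (supp g) \<le> s}"
        using g(1) by (simp add: G_def r_coset_def E_def)
    qed
    moreover have "finite {g \<in> N #>\<^bsub>S_inf\<^esub> h. card (supp g) \<le> s}"
      using finN by (simp add: r_coset_def)
    ultimately have "card {g \<in> E. coset g = y} \<le> card {g \<in> N #>\<^bsub>S_inf\<^esub> h. card (supp g) \<le> s}"
      by (intro card_mono)
    also have "\<dots> \<le> card {n \<in> N. card (supp n) \<le> 2 * s}"
      using coset_small_support_count[OF NS finN hS] h(1) by (simp add: E_def)
    also have "\<dots> \<le> ((2 * s) * (2 * s) + 1) ^ ((2 * s) * (2 * s))"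
      using cyclic_small_support_count[OF D fin N.subgroup_axioms[unfolded G_def] N(2)[unfolded G_def]] .
    finally show ?thesis .
  qed
  have "card E \<le> card (coset ` E) * ((2 * s) * (2 * s) + 1) ^ ((2 * s) * (2 * s))"
    using card_le_card_image_mult[OF _ fibre] fin by (simp add: E_def)
  also have "\<dots> \<le> fact s * ((2 * s) * (2 * s) + 1) ^ ((2 * s) * (2 * s))"
    using card_cosets by simp
  finally show ?thesis by (simp add: E_def)
qed

theorem mainTheorem11:
  shows "\<forall>\<sigma> \<in> carrier S_inf. \<exists>b::nat. \<forall>D.
           subgroup D S_inf \<and> finite D \<and> metacyclic (S_inf\<lparr>carrier := D\<rparr>) \<longrightarrow>
           card {g \<in> D. cycle_structure g = cycle_structure \<sigma>} \<le> b"
proof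
  fix \<sigma> :: "nat \<Rightarrow> nat"
  define s where "s = sum_list (cycle_structure \<sigma>)"
  show "\<exists>b::nat. \<forall>D. subgroup D S_inf \<and> finite D \<and> metacyclic (S_inf\<lparr>carrier := D\<rparr>) \<longrightarrow>
           card {g \<in> D. cycle_structure g = cycle_structure \<sigma>} \<le> b"
  proof (intro exI allI impI)
    fix D assume D: "subgroup D S_inf \<and> finite D \<and> metacyclic (S_inf\<lparr>carrier := D\<rparr>)"
    have "card (supp g) \<le> s" if "g \<in> D" "cycle_structure g = cycle_structure \<sigma>" for g
      using card_supp_le_cycle_structure[of g] subgroup.subset[of D S_inf] D that
      by (auto simp: s_def S_inf_carrier)
    then have "{g \<in> D. cycle_structure g = cycle_structure \<sigma>} \<subseteq> {g \<in> D. card (supp g) \<le> s}"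
      by blast
    then have "card {g \<in> D. cycle_structure g = cycle_structure \<sigma>} \<le> card {g \<in> D. card (supp g) \<le> s}"
      using D by (intro card_mono) auto
    also have "\<dots> \<le> fact s * ((2 * s) * (2 * s) + 1) ^ ((2 * s) * (2 * s))"
      using metacyclic_small_support_count D by blast
    finally show "card {g \<in> D. cycle_structure g = cycle_structure \<sigma>}
      \<le> fact s * ((2 * s) * (2 * s) + 1) ^ ((2 * s) * (2 * s))" .
  qed
qed

end
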